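(* Let $\lambda>0$, $d_v>0$, $\epsilon\ge0$, $m=\lambda\pi d_v^2$, $k\ge0$, and let $r_1,\dots,r_k\ge0$ be given ranges, with $f(\mathbf x)$ the set of all orderings of $(r_1,\dots,r_k)$. With $A_i=\{\mathbf y\in\mathbb R^2:\ |\|\mathbf y\|_2-r_i|\le\epsilon\}$ and $|A_i|$ its Lebesgue measure, $$\mathbb P\big[\Delta_s(f(\mathbf x),F(\mathbf 0))\le\epsilon\big]\le m^k e^{-m}\prod_{i=1}^k\frac{|A_i|}{\pi d_v^2}.$$
   Context: Landmarks seen from the origin are the points of a homogeneous Poisson point process $\Phi_{\mathbf 0}$ of intensity $\lambda$ on $\mathbb R^2$; a landmark is visible from $\mathbf 0$ if its distance to $\mathbf 0$ is at most $d_v$, and $N_{\mathbf 0}$ is the number of visible landmarks. The random measurement $F(\mathbf 0)$ is the set of all vectors in $\mathbb R^{N_{\mathbf 0}}$ obtained by listing, in some order, the distances from $\mathbf 0$ to the visible landmarks. For vectors, $\Delta_v(\mathbf u,\mathbf w)=\|\mathbf u-\mathbf w\|_\infty$ if they have the same dimension (equal to $0$ if both are empty) and $\infty$ otherwise; for sets of vectors, $\Delta_s(f,F)=\min_{\mathbf u\in f,\mathbf w\in F}\Delta_v(\mathbf u,\mathbf w)$. *)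

theory Defs
  imports "HOL-Probability.Probability" "HOL-Library.Multiset"
begin

definition poisson_pp :: "'w measure \<Rightarrow> real \<Rightarrow> ('w \<Rightarrow> (real^2) set) \<Rightarrow> bool" where
  "poisson_pp M lam Phi \<longleftrightarrow>
     prob_space M \<and>
     (\<forall>w\<in>space M. \<forall>B. bounded B \<longrightarrow> finite (Phi w \<inter> B)) \<and>
     (\<forall>B \<in> sets lborel. bounded B \<longrightarrow>
        (\<lambda>w. card (Phi w \<inter> B)) \<in> measurable M (count_space UNIV) \<and>
        (\<forall>n::nat. measure M {w\<in>space M. card (Phi w \<inter> B) = n}
            = (lam * measure lborel B) ^ n / fact n * exp (- (lam * measure lborel B)))) \<and>
     (\<forall>(I::nat set) B. finite I \<longrightarrow> (\<forall>i\<in>I. B i \<in> sets lborel \<and> bounded (B i)) \<longrightarrow>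
        disjoint_family_on B I \<longrightarrow>
        prob_space.indep_vars M (\<lambda>_. count_space UNIV) (\<lambda>i w. card (Phi w \<inter> B i)) I)"

definition Delta_v :: "real list \<Rightarrow> real list \<Rightarrow> ereal" where
  "Delta_v u w = (if length u = length w then
      (if u = [] then 0 else ereal (Max {\<bar>u ! i - w ! i\<bar> | i. i < length u}))
    else \<infinity>)"

definition Delta_s :: "real list set \<Rightarrow> real list set \<Rightarrow> ereal" where
  "Delta_s f F = (INF u\<in>f. INF w\<in>F. Delta_v u w)"

definition orderings :: "real list \<Rightarrow> real list set" where
  "orderings rs = {xs. mset xs = mset rs}"

definition measurement :: "real \<Rightarrow> (real^2) set \<Rightarrow> real list set" where
  "measurement dv P = {map norm ps | ps. distinct ps \<and> set ps = P \<inter> cball 0 dv}"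

definition annulus :: "real \<Rightarrow> real \<Rightarrow> (real^2) set" where
  "annulus r eps = {y. \<bar>norm y - r\<bar> \<le> eps}"

end

theory Submission
  imports Defs "HOL-Combinatorics.Multiset_Permutations"
begin

text \<open>If the measurement matches the ranges within eps, the visible landmarks can be labelled
  bijectively by the indices j of the ranges so that landmark j lies in the annulus A_j. Split
  the visibility disc D into the Venn cells V_T (the points of D lying in exactly the annuli
  indexed by T). A labelling determines a type f with j \<in> f j, and the landmark counts in the
  cells are the fibre sizes of f. By independence of Poisson counts in the disjoint cells, such
  a count pattern has probability at most lam^k e^(-lam |D|) \<Prod>_j |V_(f j)|, and summing
  over all types gives \<Prod>_j \<Sum>_(T \<ni> j) |V_T| = \<Prod>_j |A_j \<inter> D| \<le> \<Prod>_j |A_j|.\<close>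

lemma sum_card_fibres:
  assumes "finite K" "finite S" "f ` K \<subseteq> S"
  shows "(\<Sum>T\<in>S. card {j\<in>K. f j = T}) = card K"
  using sum.group[OF assms, of "\<lambda>_. 1::nat"] by simp

lemma prod_power_card_fibres:
  assumes "finite K" "finite S" "f ` K \<subseteq> S"
  shows "(\<Prod>T\<in>S. g T ^ card {j\<in>K. f j = T}) = (\<Prod>j\<in>K. g (f j))"
proof -
  have "(\<Prod>j\<in>{j\<in>K. f j = T}. g (f j)) = (\<Prod>j\<in>{j\<in>K. f j = T}. g T)" for T
    by (rule prod.cong) simp_all
  with prod.group[OF assms, of "\<lambda>j. g (f j)"] show ?thesis
    by simp
qed

section \<open>Counts of a Poisson point process\<close>

lemma poisson_pp_prob_space: "poisson_pp M lam Phi \<Longrightarrow> prob_space M"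
  unfolding poisson_pp_def by (rule conjunct1)

lemma poisson_pp_locally_finite:
  assumes "poisson_pp M lam Phi" "w \<in> space M" "bounded B"
  shows "finite (Phi w \<inter> B)"
  using assms(1)[unfolded poisson_pp_def, THEN conjunct2, THEN conjunct1] assms(2,3) by blast

lemma poisson_pp_counts:
  assumes "poisson_pp M lam Phi" "B \<in> sets lborel" "bounded B"
  shows "(\<lambda>w. card (Phi w \<inter> B)) \<in> measurable M (count_space UNIV)"
    and "measure M {w\<in>space M. card (Phi w \<inter> B) = n}
      = (lam * measure lborel B) ^ n / fact n * exp (- (lam * measure lborel B))"
  using assms(1)[unfolded poisson_pp_def, THEN conjunct2, THEN conjunct2, THEN conjunct1] assms(2,3)
  by blast+

lemma poisson_pp_indep_counts:
  fixes B :: "nat \<Rightarrow> (real^2) set"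
  assumes "poisson_pp M lam Phi" "finite I" "\<And>i. i \<in> I \<Longrightarrow> B i \<in> sets lborel \<and> bounded (B i)"
    and "disjoint_family_on B I"
  shows "prob_space.indep_vars M (\<lambda>_. count_space UNIV) (\<lambda>i w. card (Phi w \<inter> B i)) I"
  using assms(1)[unfolded poisson_pp_def, THEN conjunct2, THEN conjunct2, THEN conjunct2] assms(2-)
  by blast

lemma poisson_pp_count_event:
  assumes "poisson_pp M lam Phi" "B \<in> sets lborel" "bounded B"
  shows "{w\<in>space M. card (Phi w \<inter> B) = n} \<in> sets M"
proof -
  have "{w\<in>space M. card (Phi w \<inter> B) = n} = (\<lambda>w. card (Phi w \<inter> B)) -` {n} \<inter> space M"
    by blast
  then show ?thesis
    using measurable_sets[OF poisson_pp_counts(1)[OF assms]] by simp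
qed

lemma poisson_pp_prob_counts_eq_prod:
  fixes B :: "'i \<Rightarrow> (real^2) set" and n :: "'i \<Rightarrow> nat"
  assumes pp: "poisson_pp M lam Phi" and I: "finite I"
    and B: "\<And>i. i \<in> I \<Longrightarrow> B i \<in> sets lborel \<and> bounded (B i)"
    and disj: "disjoint_family_on B I"
  shows "measure M {w\<in>space M. \<forall>i\<in>I. card (Phi w \<inter> B i) = n i}
    = (\<Prod>i\<in>I. measure M {w\<in>space M. card (Phi w \<inter> B i) = n i})"
proof (cases "I = {}")
  case True
  then show ?thesis
    using poisson_pp_prob_space[OF pp] by (simp add: prob_space.prob_space)
next
  case False
  interpret prob_space M
    using pp by (rule poisson_pp_prob_space)
  define ev where "ev i = {w\<in>space M. card (Phi w \<inter> B i) = n i}" for i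
  obtain e where e: "bij_betw e {0..<card I} I"
    using ex_bij_betw_nat_finite[OF I] by blast
  let ?J = "{0..<card I}"
  let ?X = "\<lambda>j w. card (Phi w \<inter> B (e j))"
  have "disjoint_family_on (\<lambda>j. B (e j)) ?J"
    unfolding disjoint_family_on_def
  proof (intro ballI impI)
    fix j j' assume "j \<in> ?J" "j' \<in> ?J" "j \<noteq> j'"
    then show "B (e j) \<inter> B (e j') = {}"
      using disjoint_family_onD[OF disj] bij_betw_apply[OF e] inj_onD[OF bij_betw_imp_inj_on[OF e]]
      by metis
  qed
  moreover have "B (e j) \<in> sets lborel \<and> bounded (B (e j))" if "j \<in> ?J" for j
    using B[OF bij_betw_apply[OF e that]] .
  ultimately have indep: "indep_vars (\<lambda>_. count_space UNIV) ?X ?J"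
    using poisson_pp_indep_counts[OF pp, of ?J "\<lambda>j. B (e j)"] by simp
  have ev_vimage: "ev (e j) = ?X j -` {n (e j)} \<inter> space M" for j
    unfolding ev_def by blast
  have "{w\<in>space M. \<forall>i\<in>I. card (Phi w \<inter> B i) = n i} = (\<Inter>i\<in>I. ev i)"
    using False unfolding ev_def by blast
  also have "\<dots> = (\<Inter>j\<in>?J. ev (e j))"
  proof -
    have "ev ` I = ev ` e ` ?J"
      using bij_betw_imp_surj_on[OF e] by simp
    then show ?thesis
      by (simp add: image_image)
  qed
  finally have "prob {w\<in>space M. \<forall>i\<in>I. card (Phi w \<inter> B i) = n i}
      = (\<Prod>j\<in>?J. prob (?X j -` {n (e j)} \<inter> space M))"
    unfolding ev_vimage using indep_varsD_finite[OF indep] False I by simp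
  also have "\<dots> = (\<Prod>i\<in>I. prob (ev i))"
    unfolding ev_vimage[symmetric] using e by (rule prod.reindex_bij_betw)
  finally show ?thesis
    unfolding ev_def .
qed

lemma poisson_pp_prob_counts:
  fixes B :: "'i \<Rightarrow> (real^2) set" and n :: "'i \<Rightarrow> nat"
  assumes pp: "poisson_pp M lam Phi" and "finite I"
    and B: "\<And>i. i \<in> I \<Longrightarrow> B i \<in> sets lborel \<and> bounded (B i)"
    and "disjoint_family_on B I"
  shows "measure M {w\<in>space M. \<forall>i\<in>I. card (Phi w \<inter> B i) = n i}
    = (\<Prod>i\<in>I. (lam * measure lborel (B i)) ^ n i / fact (n i) * exp (- (lam * measure lborel (B i))))"
proof -
  have "measure M {w\<in>space M. \<forall>i\<in>I. card (Phi w \<inter> B i) = n i}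
      = (\<Prod>i\<in>I. measure M {w\<in>space M. card (Phi w \<inter> B i) = n i})"
    using B by (rule poisson_pp_prob_counts_eq_prod[OF pp assms(2) _ assms(4)])
  also have "\<dots> = (\<Prod>i\<in>I. (lam * measure lborel (B i)) ^ n i / fact (n i) * exp (- (lam * measure lborel (B i))))"
    using B by (intro prod.cong refl poisson_pp_counts(2)[OF pp]) auto
  finally show ?thesis .
qed

lemma poisson_pp_prob_counts_le:
  fixes B :: "'i \<Rightarrow> (real^2) set" and n :: "'i \<Rightarrow> nat"
  assumes "poisson_pp M lam Phi" "lam \<ge> 0" "finite I"
    and "\<And>i. i \<in> I \<Longrightarrow> B i \<in> sets lborel \<and> bounded (B i)"
    and "disjoint_family_on B I"
  shows "measure M {w\<in>space M. \<forall>i\<in>I. card (Phi w \<inter> B i) = n i}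
    \<le> lam ^ (\<Sum>i\<in>I. n i) * exp (- (lam * (\<Sum>i\<in>I. measure lborel (B i))))
      * (\<Prod>i\<in>I. measure lborel (B i) ^ n i)"
proof -
  have fact_le: "x / fact k \<le> x" if "x \<ge> 0" for x :: real and k
    using that fact_ge_1[of k, where 'a=real] by (simp add: divide_le_eq mult_le_cancel_left1)
  have "measure M {w\<in>space M. \<forall>i\<in>I. card (Phi w \<inter> B i) = n i}
      = (\<Prod>i\<in>I. (lam * measure lborel (B i)) ^ n i / fact (n i) * exp (- (lam * measure lborel (B i))))"
    using assms(1,3-) by (rule poisson_pp_prob_counts)
  also have "\<dots> \<le> (\<Prod>i\<in>I. (lam * measure lborel (B i)) ^ n i * exp (- (lam * measure lborel (B i))))"
    using assms(2) by (intro prod_mono conjI mult_right_mono fact_le) auto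
  also have "\<dots> = lam ^ (\<Sum>i\<in>I. n i) * exp (- (lam * (\<Sum>i\<in>I. measure lborel (B i))))
      * (\<Prod>i\<in>I. measure lborel (B i) ^ n i)"
    using assms(3)
    by (simp add: prod.distrib power_mult_distrib power_sum exp_sum sum_distrib_left
        flip: sum_negf)
  finally show ?thesis .
qed

section \<open>Venn cells of a finite family of sets\<close>

definition venn_cell :: "('i \<Rightarrow> 'a set) \<Rightarrow> 'i set \<Rightarrow> 'a set \<Rightarrow> 'i set \<Rightarrow> 'a set" where
  "venn_cell A K D T = {y\<in>D. {i\<in>K. y \<in> A i} = T}"

lemma mem_venn_cell_iff: "y \<in> venn_cell A K D T \<longleftrightarrow> y \<in> D \<and> {i\<in>K. y \<in> A i} = T"
  unfolding venn_cell_def by simp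

lemma venn_cell_subset: "venn_cell A K D T \<subseteq> D"
  unfolding venn_cell_def by blast

lemma disjoint_family_venn_cell: "disjoint_family (venn_cell A K D)"
  unfolding disjoint_family_on_def venn_cell_def by auto

lemma mem_venn_cell_self: "y \<in> D \<Longrightarrow> y \<in> venn_cell A K D {i\<in>K. y \<in> A i}"
  unfolding venn_cell_def by simp

lemma UN_venn_cell: "(\<Union>T\<in>Pow K. venn_cell A K D T) = D"
  using mem_venn_cell_self venn_cell_subset by fastforce

lemma UN_venn_cell_containing:
  assumes "j \<in> K"
  shows "(\<Union>T\<in>{T\<in>Pow K. j \<in> T}. venn_cell A K D T) = A j \<inter> D"
proof (intro equalityI subsetI)
  fix y assume y: "y \<in> A j \<inter> D"
  show "y \<in> (\<Union>T\<in>{T\<in>Pow K. j \<in> T}. venn_cell A K D T)"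
  proof (rule UN_I)
    show "{i\<in>K. y \<in> A i} \<in> {T\<in>Pow K. j \<in> T}"
      using y assms by blast
    show "y \<in> venn_cell A K D {i\<in>K. y \<in> A i}"
      using y by (intro mem_venn_cell_self) blast
  qed
qed (auto simp: venn_cell_def)

lemma venn_cell_in_sets:
  assumes "finite K" "\<And>i. i \<in> K \<Longrightarrow> A i \<in> sets N" "D \<in> sets N"
  shows "venn_cell A K D T \<in> sets N"
proof (cases "T \<subseteq> K")
  case True
  then have "venn_cell A K D T = D - (\<Union>i\<in>T. D - A i) - (\<Union>i\<in>K - T. A i)"
    unfolding venn_cell_def by auto
  also have "\<dots> \<in> sets N"
    using assms True finite_subset[OF True] by (intro sets.Diff sets.finite_UN) auto
  finally show ?thesis .
next
  case False
  then have "venn_cell A K D T = {}"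
    unfolding venn_cell_def by blast
  then show ?thesis
    by simp
qed

lemma sum_measure_venn_cell:
  assumes "finite K" "\<And>i. i \<in> K \<Longrightarrow> A i \<in> sets N" "D \<in> sets N" "emeasure N D \<noteq> \<infinity>"
    and "S \<subseteq> Pow K"
  shows "(\<Sum>T\<in>S. measure N (venn_cell A K D T)) = measure N (\<Union>T\<in>S. venn_cell A K D T)"
proof (rule measure_finite_Union[symmetric])
  show "finite S"
    using assms(1,5) by (simp add: finite_subset)
  show "venn_cell A K D ` S \<subseteq> sets N"
    using venn_cell_in_sets[of K A N D] assms(1-3) by blast
  show "disjoint_family_on (venn_cell A K D) S"
    using disjoint_family_on_mono[OF subset_UNIV disjoint_family_venn_cell] .
  show "emeasure N (venn_cell A K D T) \<noteq> \<infinity>" for T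
    using emeasure_mono[OF venn_cell_subset[of A K D T] assms(3)] assms(4)
    by (simp add: neq_top_trans)
qed

lemma card_venn_cell_of_labelling:
  assumes g: "bij_betw g K (P \<inter> D)"
  shows "card (P \<inter> venn_cell A K D T) = card {j\<in>K. {i\<in>K. g j \<in> A i} = T}"
proof -
  let ?J = "{j\<in>K. {i\<in>K. g j \<in> A i} = T}"
  have "P \<inter> venn_cell A K D T = g ` ?J"
  proof (rule set_eqI)
    fix y
    have "y \<in> P \<inter> venn_cell A K D T \<longleftrightarrow> y \<in> P \<inter> D \<and> {i\<in>K. y \<in> A i} = T"
      by (simp add: mem_venn_cell_iff)
    also have "\<dots> \<longleftrightarrow> (\<exists>j\<in>K. y = g j \<and> {i\<in>K. g j \<in> A i} = T)"
      using bij_betw_imp_surj_on[OF g] by auto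
    also have "\<dots> \<longleftrightarrow> y \<in> g ` ?J"
      by auto
    finally show "y \<in> P \<inter> venn_cell A K D T \<longleftrightarrow> y \<in> g ` ?J" .
  qed
  moreover have "inj_on g ?J"
    using bij_betw_imp_inj_on[OF g] by (rule inj_on_subset) simp
  ultimately show ?thesis
    by (simp add: card_image)
qed

lemma venn_type_of_labelling:
  assumes g: "bij_betw g K (P \<inter> D)" "\<forall>j\<in>K. g j \<in> A j"
  obtains f where "f \<in> (\<Pi>\<^sub>E j\<in>K. {T\<in>Pow K. j \<in> T})"
    and "\<And>T. card (P \<inter> venn_cell A K D T) = card {j\<in>K. f j = T}"
proof
  define f where "f = (\<lambda>j\<in>K. {i\<in>K. g j \<in> A i})"
  show "f \<in> (\<Pi>\<^sub>E j\<in>K. {T\<in>Pow K. j \<in> T})"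
    unfolding f_def using g(2) by auto
  fix T
  have "{j\<in>K. f j = T} = {j\<in>K. {i\<in>K. g j \<in> A i} = T}"
    unfolding f_def by auto
  then show "card (P \<inter> venn_cell A K D T) = card {j\<in>K. f j = T}"
    using card_venn_cell_of_labelling[OF g(1)] by simp
qed

lemma sum_PiE_prod_measure_venn_cell:
  assumes K: "finite K" and A: "\<And>i. i \<in> K \<Longrightarrow> A i \<in> sets N"
    and D: "D \<in> sets N" "emeasure N D \<noteq> \<infinity>"
  shows "(\<Sum>f\<in>(\<Pi>\<^sub>E j\<in>K. {T\<in>Pow K. j \<in> T}). \<Prod>j\<in>K. measure N (venn_cell A K D (f j)))
    = (\<Prod>j\<in>K. measure N (A j \<inter> D))"
proof -
  have "(\<Sum>f\<in>(\<Pi>\<^sub>E j\<in>K. {T\<in>Pow K. j \<in> T}). \<Prod>j\<in>K. measure N (venn_cell A K D (f j)))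
      = (\<Prod>j\<in>K. \<Sum>T\<in>{T\<in>Pow K. j \<in> T}. measure N (venn_cell A K D T))"
    using K by (intro prod_sum_PiE[symmetric]) auto
  also have "\<dots> = (\<Prod>j\<in>K. measure N (A j \<inter> D))"
  proof (rule prod.cong[OF refl])
    fix j assume "j \<in> K"
    then show "(\<Sum>T\<in>{T\<in>Pow K. j \<in> T}. measure N (venn_cell A K D T)) = measure N (A j \<inter> D)"
      using sum_measure_venn_cell[of K A N D, OF K A D Collect_subset[of "Pow K"]]
        UN_venn_cell_containing[of j K A D] by simp
  qed
  finally show ?thesis .
qed

lemma poisson_pp_prob_venn_counts_le:
  fixes K :: "'i set" and A :: "'i \<Rightarrow> (real^2) set" and f :: "'i \<Rightarrow> 'i set"
  assumes pp: "poisson_pp M lam Phi" and lam: "lam \<ge> 0" and K: "finite K"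
    and A: "\<And>j. j \<in> K \<Longrightarrow> A j \<in> sets lborel" and D: "D \<in> sets lborel" "bounded D"
    and f: "f ` K \<subseteq> Pow K"
  shows "measure M {w\<in>space M. \<forall>T\<in>Pow K. card (Phi w \<inter> venn_cell A K D T) = card {j\<in>K. f j = T}}
    \<le> lam ^ card K * exp (- (lam * measure lborel D)) * (\<Prod>j\<in>K. measure lborel (venn_cell A K D (f j)))"
proof -
  let ?V = "venn_cell A K D"
  have "measure M {w\<in>space M. \<forall>T\<in>Pow K. card (Phi w \<inter> ?V T) = card {j\<in>K. f j = T}}
      \<le> lam ^ (\<Sum>T\<in>Pow K. card {j\<in>K. f j = T}) * exp (- (lam * (\<Sum>T\<in>Pow K. measure lborel (?V T))))
        * (\<Prod>T\<in>Pow K. measure lborel (?V T) ^ card {j\<in>K. f j = T})"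
    using K venn_cell_in_sets[of K A lborel D, OF K A D(1)] bounded_subset[OF D(2) venn_cell_subset]
      disjoint_family_on_mono[OF subset_UNIV disjoint_family_venn_cell]
    by (intro poisson_pp_prob_counts_le[OF pp lam]) auto
  also have "\<dots> = lam ^ card K * exp (- (lam * measure lborel D)) * (\<Prod>j\<in>K. measure lborel (?V (f j)))"
    using sum_card_fibres[OF K _ f]
      prod_power_card_fibres[OF K _ f, where g="\<lambda>T. measure lborel (?V T)"]
      sum_measure_venn_cell[of K A lborel D "Pow K",
        OF K A D(1) emeasure_bounded_finite[OF D(2), THEN less_imp_neq]]
    by (simp add: K UN_venn_cell)
  finally show ?thesis .
qed

text \<open>The labelling event is not known to be measurable, hence the bound for its subsets.\<close>

lemma poisson_pp_measure_labelled_le: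
  fixes K :: "'i set" and A :: "'i \<Rightarrow> (real^2) set"
  assumes pp: "poisson_pp M lam Phi" and lam: "lam \<ge> 0" and K: "finite K"
    and A: "\<And>j. j \<in> K \<Longrightarrow> A j \<in> sets lborel" and D: "D \<in> sets lborel" "bounded D"
    and S: "S \<subseteq> {w\<in>space M. \<exists>g. bij_betw g K (Phi w \<inter> D) \<and> (\<forall>j\<in>K. g j \<in> A j)}"
  shows "measure M S
    \<le> lam ^ card K * exp (- (lam * measure lborel D)) * (\<Prod>j\<in>K. measure lborel (A j \<inter> D))"
proof -
  interpret prob_space M
    using pp by (rule poisson_pp_prob_space)
  define F where "F = (\<Pi>\<^sub>E j\<in>K. {T\<in>Pow K. j \<in> T})"
  define E where "E f = {w\<in>space M. \<forall>T\<in>Pow K. card (Phi w \<inter> venn_cell A K D T) = card {j\<in>K. f j = T}}"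
    for f :: "'i \<Rightarrow> 'i set"
  define c where "c = lam ^ card K * exp (- (lam * measure lborel D))"
  have F_finite: "finite F"
    unfolding F_def using K by (intro finite_PiE) auto
  have E_events: "E f \<in> events" for f
    unfolding E_def using K venn_cell_in_sets[of K A lborel D, OF K A D(1)]
      bounded_subset[OF D(2) venn_cell_subset]
    by (intro sets.sets_Collect_finite_All poisson_pp_count_event[OF pp]) auto
  have "S \<subseteq> (\<Union>f\<in>F. E f)"
  proof
    fix w assume "w \<in> S"
    then obtain g where w: "w \<in> space M" and g: "bij_betw g K (Phi w \<inter> D)" "\<forall>j\<in>K. g j \<in> A j"
      using S by blast
    obtain f where "f \<in> F" "\<And>T. card (Phi w \<inter> venn_cell A K D T) = card {j\<in>K. f j = T}"
      using venn_type_of_labelling[OF g] unfolding F_def by blast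
    then show "w \<in> (\<Union>f\<in>F. E f)"
      unfolding E_def using w by blast
  qed
  then have "prob S \<le> prob (\<Union>f\<in>F. E f)"
    using E_events F_finite by (intro finite_measure_mono) auto
  also have "\<dots> \<le> (\<Sum>f\<in>F. prob (E f))"
    using E_events F_finite by (intro finite_measure_subadditive_finite) auto
  also have "\<dots> \<le> (\<Sum>f\<in>F. c * (\<Prod>j\<in>K. measure lborel (venn_cell A K D (f j))))"
    unfolding E_def c_def F_def
    by (intro sum_mono poisson_pp_prob_venn_counts_le[OF pp lam K A D]) (auto simp: PiE_def)
  also have "\<dots> = c * (\<Prod>j\<in>K. measure lborel (A j \<inter> D))"
    unfolding F_def sum_distrib_left[symmetric]
    using sum_PiE_prod_measure_venn_cell[of K A lborel D, OF K A D(1)] emeasure_bounded_finite[OF D(2)]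
    by simp
  finally show ?thesis
    unfolding c_def .
qed

section \<open>Range measurements\<close>

lemma annulus_in_sets: "annulus r e \<in> sets borel"
proof -
  have "closed (annulus r e)"
    unfolding annulus_def by (intro closed_Collect_le continuous_intros)
  then show ?thesis
    by simp
qed

lemma bounded_annulus: "bounded (annulus r e)"
  unfolding annulus_def bounded_iff by (rule exI[of _ "\<bar>r\<bar> + \<bar>e\<bar>"]) auto

lemma orderings_eq_permutations_of_multiset: "orderings rs = permutations_of_multiset (mset rs)"
  unfolding orderings_def permutations_of_multiset_def ..

lemma measurement_eq_image_permutations_of_set:
  "measurement dv P = map norm ` permutations_of_set (P \<inter> cball 0 dv)"
  unfolding measurement_def permutations_of_set_def by blast

lemma finite_INF_leE:
  fixes g :: "'a \<Rightarrow> 'b::complete_linorder"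
  assumes "finite A" "A \<noteq> {}" "(INF x\<in>A. g x) \<le> c"
  obtains x where "x \<in> A" "g x \<le> c"
proof -
  have "(INF x\<in>A. g x) = Min (g ` A)"
    using assms(1,2) by (intro cInf_eq_Min) auto
  also have "\<dots> \<in> g ` A"
    using assms(1,2) by (intro Min_in) auto
  finally show ?thesis
    using assms(3) that by auto
qed

lemma Delta_v_leD:
  assumes "Delta_v u v \<le> ereal e"
  shows "length u = length v" and "\<And>i. i < length u \<Longrightarrow> \<bar>u ! i - v ! i\<bar> \<le> e"
proof -
  show len: "length u = length v"
    using assms unfolding Delta_v_def by (auto split: if_splits)
  fix i assume i: "i < length u"
  then have "u \<noteq> []"
    by auto
  then have "Max {\<bar>u ! i - v ! i\<bar> | i. i < length u} \<le> e"
    using assms unfolding Delta_v_def by (simp add: len)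
  moreover have "\<bar>u ! i - v ! i\<bar> \<le> Max {\<bar>u ! i - v ! i\<bar> | i. i < length u}"
    using i by (intro Max_ge) auto
  ultimately show "\<bar>u ! i - v ! i\<bar> \<le> e"
    by linarith
qed

lemma labelling_of_Delta_s_le:
  assumes fin: "finite (P \<inter> cball 0 dv)"
    and le: "Delta_s (orderings rs) (measurement dv P) \<le> ereal eps"
  shows "\<exists>g. bij_betw g {..<length rs} (P \<inter> cball 0 dv)
    \<and> (\<forall>j\<in>{..<length rs}. g j \<in> annulus (rs ! j) eps)"
proof -
  have "finite (orderings rs)" "orderings rs \<noteq> {}"
    unfolding orderings_eq_permutations_of_multiset by (auto intro: permutations_of_multisetI)
  then obtain u where u: "u \<in> orderings rs"
    and u_le: "(INF v\<in>measurement dv P. Delta_v u v) \<le> ereal eps"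
    using le unfolding Delta_s_def by (rule finite_INF_leE)
  have "finite (measurement dv P)" "measurement dv P \<noteq> {}"
    unfolding measurement_eq_image_permutations_of_set using fin by auto
  then obtain v where v: "v \<in> measurement dv P" and uv: "Delta_v u v \<le> ereal eps"
    using u_le by (rule finite_INF_leE)
  then obtain ps where ps: "ps \<in> permutations_of_set (P \<inter> cball 0 dv)" and v_eq: "v = map norm ps"
    unfolding measurement_eq_image_permutations_of_set by blast
  obtain p where p: "p permutes {..<length u}" "permute_list p u = rs"
    using u mset_eq_permutation[of rs u] unfolding orderings_def by auto
  have len: "length ps = length u" "length rs = length u"
    using Delta_v_leD(1)[OF uv] v_eq p(2) by auto
  define qs where "qs = permute_list p ps"
  have p_ps: "p permutes {..<length ps}"
    using p(1) len by simp
  have "bij_betw (nth qs) {..<length rs} (P \<inter> cball 0 dv)"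
    using permutations_of_setD[OF ps] p_ps len by (intro bij_betw_nth) (simp_all add: qs_def)
  moreover have "qs ! j \<in> annulus (rs ! j) eps" if "j \<in> {..<length rs}" for j
  proof -
    have pj: "p j < length u"
      using permutes_in_image[OF p(1)] that len by simp
    have "rs ! j = u ! p j" "qs ! j = ps ! p j"
      using that len p unfolding qs_def by (auto simp: permute_list_nth)
    moreover have "\<bar>u ! p j - norm (ps ! p j)\<bar> \<le> eps"
      using Delta_v_leD(2)[OF uv pj] v_eq len pj by simp
    ultimately show ?thesis
      unfolding annulus_def by (simp add: abs_minus_commute)
  qed
  ultimately show ?thesis
    by blast
qed

theorem lemma11:
  fixes M :: "'w measure" and Phi :: "'w \<Rightarrow> (real^2) set"
    and lam dv eps :: real and rs :: "real list"
  assumes "poisson_pp M lam Phi" and "lam > 0" and "dv > 0" and "eps \<ge> 0"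
    and "\<forall>r\<in>set rs. r \<ge> 0"
  shows "measure M {w\<in>space M. Delta_s (orderings rs) (measurement dv (Phi w)) \<le> ereal eps}
    \<le> (lam * pi * dv^2) ^ length rs * exp (- (lam * pi * dv^2))
       * (\<Prod>r\<leftarrow>rs. measure lborel (annulus r eps) / (pi * dv^2))"
proof -
  define K where "K = {..<length rs}"
  define A where "A j = annulus (rs ! j) eps" for j
  define D where "D = cball (0::real^2) dv"
  have D_measure: "measure lborel D = pi * dv^2"
    unfolding D_def using assms(3) by (simp add: content_cball_conv_ball circle_area)
  have "measure M {w\<in>space M. Delta_s (orderings rs) (measurement dv (Phi w)) \<le> ereal eps}
      \<le> lam ^ card K * exp (- (lam * measure lborel D)) * (\<Prod>j\<in>K. measure lborel (A j \<inter> D))"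
  proof (rule poisson_pp_measure_labelled_le[OF assms(1)])
    show "{w\<in>space M. Delta_s (orderings rs) (measurement dv (Phi w)) \<le> ereal eps}
        \<subseteq> {w\<in>space M. \<exists>g. bij_betw g K (Phi w \<inter> D) \<and> (\<forall>j\<in>K. g j \<in> A j)}"
      unfolding K_def A_def D_def
      using labelling_of_Delta_s_le poisson_pp_locally_finite[OF assms(1)] by blast
  qed (use assms(2) in \<open>auto simp: K_def A_def D_def annulus_in_sets\<close>)
  also have "\<dots> \<le> lam ^ card K * exp (- (lam * measure lborel D)) * (\<Prod>j\<in>K. measure lborel (A j))"
    using assms(2) emeasure_bounded_finite[OF bounded_annulus]
    by (intro mult_left_mono prod_mono conjI measure_mono_fmeasurable)
      (auto simp: A_def D_def annulus_in_sets fmeasurable_def)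
  also have "\<dots> = (lam * pi * dv^2) ^ length rs * exp (- (lam * pi * dv^2))
       * (\<Prod>r\<leftarrow>rs. measure lborel (annulus r eps) / (pi * dv^2))"
    unfolding prod.list_conv_set_nth D_measure K_def A_def using assms(3)
    by (simp add: atLeast0LessThan prod_dividef field_simps)
  finally show ?thesis .
qed

end
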